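(* Let $\delta\ge1$, let $G=(V,E,w)$ be a weighted graph, and let $\mathcal{R}$ be the set of constraints $\{i,j|k\}$, over all triples of distinct indices $i,j,k$, such that $w_{ij}>\delta^2\max\{w_{ik},w_{jk}\}$. If $T$ is any binary HC-tree for $V$ consistent with every constraint in $\mathcal{R}$, then $\rho_G(T)\le(\delta^2+1)\rho^*_G$.
   Context: Weights are symmetric, nonnegative, and $0$ on non-edges. An HC-tree for $V=\{v_1,\dots,v_n\}$ is a rooted tree with leaf set $V$. $T$ is consistent with $\{i,j|k\}$ if $\mathrm{LCA}(v_i,v_j)$ is a proper descendant of $\mathrm{LCA}(v_i,v_j,v_k)$ (relation $\{i,j|k\}$ holds in $T$); relation $\{i|j|k\}$ holds if $\mathrm{LCA}(v_i,v_j)=\mathrm{LCA}(v_j,v_k)=\mathrm{LCA}(v_i,v_j,v_k)$. Triplet cost $c_T(i,j,k)$: $w_{ik}+w_{jk}$ if $\{i,j|k\}$; $w_{ij}+w_{jk}$ if $\{i,k|j\}$; $w_{ij}+w_{ik}$ if $\{j,k|i\}$; $w_{ij}+w_{jk}+w_{ik}$ if $\{i|j|k\}$. $\mathrm{TC}_G(T)=\sum c_T(i,j,k)$ and $\mathrm{BC}(G)=\sum\min\{w_{ij}+w_{ik},w_{ij}+w_{jk},w_{ik}+w_{jk}\}$ over unordered triples of distinct indices; $\rho_G(T)=\mathrm{TC}_G(T)/\mathrm{BC}(G)$ (with $0/0=1$, $x/0=+\infty$ for $x>0$), $\rho^*_G=\min_T\rho_G(T)$ over all HC-trees. *)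

theory Defs
  imports "HOL-Analysis.Analysis" "HOL-Library.Sublist" "HOL-Library.Extended_Real"
begin

text \<open>Rooted trees with labelled leaves. Vertices v_1..v_n are represented by indices 0..n-1.\<close>
datatype 'a hctree = Leaf 'a | Node "'a hctree list"

function leaf_paths :: "'a hctree \<Rightarrow> ('a \<times> nat list) list" where
  "leaf_paths (Leaf a) = [(a, [])]"
| "leaf_paths (Node ts) =
     concat (map (\<lambda>(i,t). map (\<lambda>(a,p). (a, i # p)) (leaf_paths t)) (zip [0..<length ts] ts))"
  by pat_completeness auto
termination
  by (relation "Wellfounded.measure size") (auto dest!: set_zip_rightD simp: less_Suc_eq_le intro: size_list_estimation')

definition leaves :: "'a hctree \<Rightarrow> 'a list" where
  "leaves T = map fst (leaf_paths T)"

text \<open>Every internal node has at least one child (so leaves are exactly the Leaf nodes).\<close>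
fun inner_ok :: "'a hctree \<Rightarrow> bool" where
  "inner_ok (Leaf a) = True"
| "inner_ok (Node ts) = (ts \<noteq> [] \<and> (\<forall>t\<in>set ts. inner_ok t))"

fun binary :: "'a hctree \<Rightarrow> bool" where
  "binary (Leaf a) = True"
| "binary (Node ts) = (length ts = 2 \<and> (\<forall>t\<in>set ts. binary t))"

definition is_hctree :: "nat \<Rightarrow> nat hctree \<Rightarrow> bool" where
  "is_hctree n T \<longleftrightarrow> inner_ok T \<and> distinct (leaves T) \<and> set (leaves T) = {0..<n}"

definition lpath :: "'a hctree \<Rightarrow> 'a \<Rightarrow> nat list" where
  "lpath T a = the (map_of (leaf_paths T) a)"

text \<open>LCA of leaves, as a node position (longest common prefix of the leaf positions).\<close>
definition lca2 :: "'a hctree \<Rightarrow> 'a \<Rightarrow> 'a \<Rightarrow> nat list" where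
  "lca2 T a b = longest_common_prefix (lpath T a) (lpath T b)"

definition lca3 :: "'a hctree \<Rightarrow> 'a \<Rightarrow> 'a \<Rightarrow> 'a \<Rightarrow> nat list" where
  "lca3 T a b c = longest_common_prefix (lca2 T a b) (lpath T c)"

text \<open>Relation {i,j|k}: LCA(i,j) is a proper descendant of LCA(i,j,k).\<close>
definition rel_pair :: "'a hctree \<Rightarrow> 'a \<Rightarrow> 'a \<Rightarrow> 'a \<Rightarrow> bool" where
  "rel_pair T i j k \<longleftrightarrow> strict_prefix (lca3 T i j k) (lca2 T i j)"

definition rel_star :: "'a hctree \<Rightarrow> 'a \<Rightarrow> 'a \<Rightarrow> 'a \<Rightarrow> bool" where
  "rel_star T i j k \<longleftrightarrow> lca2 T i j = lca3 T i j k \<and> lca2 T j k = lca3 T i j k"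

definition triplet_cost :: "(nat \<Rightarrow> nat \<Rightarrow> real) \<Rightarrow> nat hctree \<Rightarrow> nat \<Rightarrow> nat \<Rightarrow> nat \<Rightarrow> real" where
  "triplet_cost w T i j k =
     (if rel_pair T i j k then w i k + w j k
      else if rel_pair T i k j then w i j + w j k
      else if rel_pair T j k i then w i j + w i k
      else if rel_star T i j k then w i j + w j k + w i k
      else 0)"

definition triples :: "nat \<Rightarrow> (nat \<times> nat \<times> nat) set" where
  "triples n = {(i,j,k). i < j \<and> j < k \<and> k < n}"

definition TC :: "nat \<Rightarrow> (nat \<Rightarrow> nat \<Rightarrow> real) \<Rightarrow> nat hctree \<Rightarrow> real" where
  "TC n w T = (\<Sum>(i,j,k)\<in>triples n. triplet_cost w T i j k)"

definition BC :: "nat \<Rightarrow> (nat \<Rightarrow> nat \<Rightarrow> real) \<Rightarrow> real" where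
  "BC n w = (\<Sum>(i,j,k)\<in>triples n. min (w i j + w i k) (min (w i j + w j k) (w i k + w j k)))"

definition rho :: "nat \<Rightarrow> (nat \<Rightarrow> nat \<Rightarrow> real) \<Rightarrow> nat hctree \<Rightarrow> ereal" where
  "rho n w T = (if BC n w = 0 then (if TC n w T = 0 then 1 else \<infinity>)
                else ereal (TC n w T / BC n w))"

definition rho_star :: "nat \<Rightarrow> (nat \<Rightarrow> nat \<Rightarrow> real) \<Rightarrow> ereal" where
  "rho_star n w = (INF T\<in>{T. is_hctree n T}. rho n w T)"

definition weighted_graph :: "nat \<Rightarrow> (nat \<Rightarrow> nat \<Rightarrow> real) \<Rightarrow> bool" where
  "weighted_graph n w \<longleftrightarrow> (\<forall>i<n. \<forall>j<n. w i j = w j i \<and> w i j \<ge> 0)"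

end

theory Submission imports Defs begin

text \<open>
  In any tree, of the three pairwise LCAs of a triple at least two coincide with the LCA of the
  whole triple, so at most one of the relations \<open>{i,j|k}\<close>, \<open>{i,k|j}\<close>, \<open>{j,k|i}\<close> holds, and if
  none does then \<open>{i|j|k}\<close> holds. Hence every tree pays at least the minimum
  \<open>min {w\<^sub>i\<^sub>j + w\<^sub>i\<^sub>k, w\<^sub>i\<^sub>j + w\<^sub>j\<^sub>k, w\<^sub>i\<^sub>k + w\<^sub>j\<^sub>k}\<close> on each triple, i.e. \<open>BC(G) \<le> TC\<^sub>G(T')\<close> and
  \<open>\<rho>\<^sup>*\<^sub>G \<ge> 1\<close>. For the given tree \<open>T\<close>, a weight exceeding \<open>\<delta>\<^sup>2\<close> times both others is the largest
  one and forces its pair to be split last, so \<open>T\<close> pays exactly the minimum; otherwise the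
  largest weight is at most \<open>\<delta>\<^sup>2\<close> times the second largest, and even the sum of all three weights
  is at most \<open>\<delta>\<^sup>2 + 1\<close> times the minimum. Thus \<open>\<rho>\<^sub>G(T) \<le> \<delta>\<^sup>2 + 1 \<le> (\<delta>\<^sup>2 + 1) \<rho>\<^sup>*\<^sub>G\<close>.
\<close>

lemma prefix_longest_common_prefix_iff:
  "prefix ps (longest_common_prefix xs ys) \<longleftrightarrow> prefix ps xs \<and> prefix ps ys"
  by (meson longest_common_prefix_max_prefix longest_common_prefix_prefix1
      longest_common_prefix_prefix2 prefix_order.trans)

lemma prefix_ext: "(\<And>ps. prefix ps xs \<longleftrightarrow> prefix ps ys) \<Longrightarrow> xs = ys"
  by (meson prefix_order.antisym prefix_order.refl)

lemma longest_common_prefix_commute: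
  "longest_common_prefix xs ys = longest_common_prefix ys xs"
  by (rule prefix_ext) (auto simp: prefix_longest_common_prefix_iff)

lemma longest_common_prefix_right_commute:
  "longest_common_prefix (longest_common_prefix xs ys) zs =
   longest_common_prefix (longest_common_prefix xs zs) ys"
  by (rule prefix_ext) (auto simp: prefix_longest_common_prefix_iff)

lemma longest_common_prefix_eq_left: "prefix xs ys \<Longrightarrow> longest_common_prefix xs ys = xs"
  by (rule prefix_ext) (metis prefix_longest_common_prefix_iff prefix_order.trans)

lemma longest_common_prefix_of_common_prefixes:
  "longest_common_prefix (longest_common_prefix xs ys) zs = longest_common_prefix xs ys \<or>
   longest_common_prefix (longest_common_prefix xs ys) zs = longest_common_prefix xs zs"
proof -
  let ?A = "longest_common_prefix xs ys" and ?B = "longest_common_prefix xs zs"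
  have meet: "longest_common_prefix ?A zs = longest_common_prefix ?A ?B"
    by (rule prefix_ext) (auto simp: prefix_longest_common_prefix_iff)
  have "prefix ?A ?B \<or> prefix ?B ?A"
    by (rule prefix_same_cases) (rule longest_common_prefix_prefix1)+
  then show ?thesis
    unfolding meet
    by (metis longest_common_prefix_eq_left longest_common_prefix_commute)
qed

lemma lca3_swap12: "lca3 T i j k = lca3 T j i k"
  by (simp add: lca3_def lca2_def longest_common_prefix_commute)

lemma lca3_swap23: "lca3 T i j k = lca3 T i k j"
  by (simp add: lca3_def lca2_def longest_common_prefix_right_commute)

lemma lca3_prefix_lca2: "prefix (lca3 T i j k) (lca2 T i j)"
  by (simp add: lca3_def longest_common_prefix_prefix1)

lemma rel_pair_iff_lca2_ne_lca3: "rel_pair T i j k \<longleftrightarrow> lca2 T i j \<noteq> lca3 T i j k"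
  using lca3_prefix_lca2 by (auto simp: rel_pair_def strict_prefix_def)

lemma rel_pair_commute: "rel_pair T i j k \<longleftrightarrow> rel_pair T j i k"
  by (simp add: rel_pair_iff_lca2_ne_lca3 lca2_def lca3_swap12 longest_common_prefix_commute)

lemma lca2_eq_lca3_cases: "lca2 T i j = lca3 T i j k \<or> lca2 T i k = lca3 T i j k"
  unfolding lca3_def lca2_def
  using longest_common_prefix_of_common_prefixes by metis

lemma rel_pair_exclusive: "rel_pair T i j k \<Longrightarrow> \<not> rel_pair T i k j"
  using lca2_eq_lca3_cases[of T i j k]
  by (simp add: rel_pair_iff_lca2_ne_lca3 lca3_swap23)

lemma rel_star_if_no_rel_pair:
  assumes "\<not> rel_pair T i j k" and "\<not> rel_pair T j k i"
  shows "rel_star T i j k"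
  using assms by (metis rel_star_def rel_pair_iff_lca2_ne_lca3 lca3_swap12 lca3_swap23)

lemma sum3_le_if_no_dominant:
  fixes x y z d :: real
  assumes "0 \<le> x" "0 \<le> y" "0 \<le> z" "0 \<le> d"
    and "x \<le> d * max y z" "y \<le> d * max x z" "z \<le> d * max x y"
  shows "x + y + z \<le> (d + 1) * min (x + y) (min (x + z) (y + z))"
proof -
  have "d * max y z \<le> d * y + d * z" "d * max x z \<le> d * x + d * z" "d * max x y \<le> d * x + d * y"
    using assms(1-4) by (simp_all add: max_def mult_left_mono)
  then show ?thesis
    using assms unfolding min_def by (auto simp: algebra_simps)
qed

lemma less_if_dominant:
  fixes x y z d :: real
  assumes "0 \<le> y" "0 \<le> z" "1 \<le> d" "x > d * max y z"
  shows "y < x" and "z < x"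
proof -
  have "max y z \<le> d * max y z"
    using assms(1-3) by (simp add: mult_le_cancel_right1 max_def)
  then show "y < x" "z < x" using assms(4) by auto
qed

context
  fixes w :: "nat \<Rightarrow> nat \<Rightarrow> real" and T :: "nat hctree" and i j k :: nat
  assumes nonneg: "0 \<le> w i j" "0 \<le> w i k" "0 \<le> w j k"
begin

abbreviation min_cost :: real where
  "min_cost \<equiv> min (w i j + w i k) (min (w i j + w j k) (w i k + w j k))"

lemma min_cost_le_triplet_cost: "min_cost \<le> triplet_cost w T i j k"
  using rel_star_if_no_rel_pair[of T i j k] nonneg
  by (auto simp: triplet_cost_def min_def)

lemma triplet_cost_le_sum: "triplet_cost w T i j k \<le> w i j + w i k + w j k"
  using nonneg by (simp add: triplet_cost_def)

lemma triplet_cost_le_mult_min_cost: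
  fixes d :: real
  assumes "1 \<le> d"
    and ij: "w i j > d * max (w i k) (w j k) \<longrightarrow> rel_pair T i j k"
    and ik: "w i k > d * max (w i j) (w j k) \<longrightarrow> rel_pair T i k j"
    and jk: "w j k > d * max (w i j) (w i k) \<longrightarrow> rel_pair T j k i"
  shows "triplet_cost w T i j k \<le> (d + 1) * min_cost"
proof -
  have "0 \<le> min_cost" using nonneg by (auto simp: min_def)
  then have "1 * min_cost \<le> (d + 1) * min_cost"
    using assms(1) by (intro mult_right_mono) auto
  then have min_cost_le: "min_cost \<le> (d + 1) * min_cost"
    by (simp only: mult_1)
  consider (ij_dominant) "w i j > d * max (w i k) (w j k)"
    | (ik_dominant) "w i k > d * max (w i j) (w j k)"
    | (jk_dominant) "w j k > d * max (w i j) (w i k)"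
    | (no_dominant) "w i j \<le> d * max (w i k) (w j k)" "w i k \<le> d * max (w i j) (w j k)"
      "w j k \<le> d * max (w i j) (w i k)"
    by (meson not_le)
  then show ?thesis
  proof cases
    case ij_dominant
    with ij have "rel_pair T i j k" by blast
    moreover have "w i k < w i j" "w j k < w i j"
      using less_if_dominant[OF nonneg(2,3) assms(1) ij_dominant] by auto
    ultimately have "triplet_cost w T i j k = min_cost"
      by (simp add: triplet_cost_def min_def)
    then show ?thesis using min_cost_le by simp
  next
    case ik_dominant
    with ik have "rel_pair T i k j" by blast
    then have "\<not> rel_pair T i j k" by (rule rel_pair_exclusive)
    moreover note \<open>rel_pair T i k j\<close>
    moreover have "w i j < w i k" "w j k < w i k"
      using less_if_dominant[OF nonneg(1,3) assms(1) ik_dominant] by auto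
    ultimately have "triplet_cost w T i j k = min_cost"
      by (simp add: triplet_cost_def min_def)
    then show ?thesis using min_cost_le by simp
  next
    case jk_dominant
    with jk have "rel_pair T j k i" by blast
    then have "\<not> rel_pair T i j k" "\<not> rel_pair T i k j"
      using rel_pair_exclusive[of T j k i] rel_pair_exclusive[of T k j i]
        rel_pair_commute[of T i j k] rel_pair_commute[of T k j i] rel_pair_commute[of T i k j]
      by blast+
    moreover note \<open>rel_pair T j k i\<close>
    moreover have "w i j < w j k" "w i k < w j k"
      using less_if_dominant[OF nonneg(1,2) assms(1) jk_dominant] by auto
    ultimately have "triplet_cost w T i j k = min_cost"
      by (simp add: triplet_cost_def min_def)
    then show ?thesis using min_cost_le by simp
  next
    case no_dominant
    then have "w i j + w i k + w j k \<le> (d + 1) * min_cost"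
      using sum3_le_if_no_dominant[of "w i j" "w i k" "w j k" d] nonneg assms(1)
      by (simp add: max.commute)
    then show ?thesis using triplet_cost_le_sum by linarith
  qed
qed

end

lemma weighted_graph_nonneg_triple:
  assumes "weighted_graph n w" and "(i, j, k) \<in> triples n"
  shows "0 \<le> w i j" "0 \<le> w i k" "0 \<le> w j k"
  using assms by (auto simp: weighted_graph_def triples_def)

lemma BC_nonneg: "weighted_graph n w \<Longrightarrow> 0 \<le> BC n w"
  unfolding BC_def
proof (rule sum_nonneg, clarify)
  fix i j k assume "weighted_graph n w" "(i, j, k) \<in> triples n"
  from weighted_graph_nonneg_triple[OF this]
  show "0 \<le> min (w i j + w i k) (min (w i j + w j k) (w i k + w j k))" by simp
qed

lemma BC_le_TC: "weighted_graph n w \<Longrightarrow> BC n w \<le> TC n w T"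
  unfolding BC_def TC_def
  by (rule sum_mono) (auto dest: weighted_graph_nonneg_triple intro: min_cost_le_triplet_cost)

lemma TC_le_mult_BC:
  assumes "1 \<le> d" and "weighted_graph n w"
    and forced: "\<forall>i<n. \<forall>j<n. \<forall>k<n. i \<noteq> j \<and> i \<noteq> k \<and> j \<noteq> k \<and>
            w i j > d * max (w i k) (w j k) \<longrightarrow> rel_pair T i j k"
  shows "TC n w T \<le> (d + 1) * BC n w"
  unfolding TC_def BC_def sum_distrib_left
proof (rule sum_mono, clarify)
  fix i j k assume ijk: "(i, j, k) \<in> triples n"
  then have "i < j" "j < k" "k < n" by (auto simp: triples_def)
  moreover have "w j i = w i j" "w k i = w i k" "w k j = w j k"
    using assms(2) \<open>i < j\<close> \<open>j < k\<close> \<open>k < n\<close> by (auto simp: weighted_graph_def)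
  ultimately show "triplet_cost w T i j k \<le> (d + 1) * min (w i j + w i k) (min (w i j + w j k) (w i k + w j k))"
    using forced[rule_format, of i j k] forced[rule_format, of i k j] forced[rule_format, of j k i]
    by (intro triplet_cost_le_mult_min_cost weighted_graph_nonneg_triple[OF assms(2) ijk] assms(1)) auto
qed

lemma one_le_rho: "weighted_graph n w \<Longrightarrow> 1 \<le> rho n w T"
  using BC_le_TC[of n w T] BC_nonneg[of n w] by (auto simp: rho_def)

lemma one_le_rho_star: "weighted_graph n w \<Longrightarrow> 1 \<le> rho_star n w"
  unfolding rho_star_def by (rule INF_greatest) (rule one_le_rho)

lemma rho_le_if_TC_le:
  assumes "weighted_graph n w" and "1 \<le> c" and "TC n w T \<le> c * BC n w"
  shows "rho n w T \<le> ereal c"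
proof (cases "BC n w = 0")
  case True
  then have "TC n w T = 0" using assms BC_le_TC[of n w T] by auto
  then show ?thesis using True assms(2) by (simp add: rho_def)
next
  case False
  then have "0 < BC n w" using BC_nonneg[OF assms(1)] by simp
  then show ?thesis using False assms(3) by (simp add: rho_def divide_le_eq)
qed

theorem lemma7:
  fixes n :: nat and w :: "nat \<Rightarrow> nat \<Rightarrow> real" and \<delta> :: real and T :: "nat hctree"
  assumes "\<delta> \<ge> 1"
    and "weighted_graph n w"
    and "is_hctree n T" and "binary T"
    and "\<forall>i<n. \<forall>j<n. \<forall>k<n. i \<noteq> j \<and> i \<noteq> k \<and> j \<noteq> k \<and>
            w i j > \<delta>\<^sup>2 * max (w i k) (w j k) \<longrightarrow> rel_pair T i j k"
  shows "rho n w T \<le> ereal (\<delta>\<^sup>2 + 1) * rho_star n w"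
proof -
  have "1 \<le> \<delta>\<^sup>2" using assms(1) by (simp add: one_le_power)
  have "rho n w T \<le> ereal (\<delta>\<^sup>2 + 1)"
    using TC_le_mult_BC[OF \<open>1 \<le> \<delta>\<^sup>2\<close> assms(2,5)] \<open>1 \<le> \<delta>\<^sup>2\<close>
    by (intro rho_le_if_TC_le[OF assms(2)]) auto
  also have "\<dots> = ereal (\<delta>\<^sup>2 + 1) * 1" by simp
  also have "\<dots> \<le> ereal (\<delta>\<^sup>2 + 1) * rho_star n w"
    using one_le_rho_star[OF assms(2)] \<open>1 \<le> \<delta>\<^sup>2\<close> by (intro ereal_mult_left_mono) auto
  finally show ?thesis .
qed

end
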